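(* Let $W,Q$ be symmetric BIDMCs, $p\in(0,1)$ and $\varepsilon\in[0,1]$. If $p\,\mathrm B(\varepsilon)+(1-p)W\preccurlyeq p\,\mathrm B(\varepsilon)+(1-p)Q$, then $W\preccurlyeq Q$.
   Context: A binary-input discrete memoryless channel (BIDMC) $W$ has input $x$ uniformly distributed on $\{0,1\}$, a discrete output alphabet and transition probabilities $\Pr(y\mid x)$. Its LR-profile is $P_W(\varepsilon)=\Pr\big(\mathcal L_W(y)=\varepsilon/(1-\varepsilon)\big)$, where $\mathcal L_W(\hat y)=\Pr(y=\hat y\mid x=0)/\Pr(y=\hat y\mid x=1)$; $W\cong W'$ if their LR-profiles coincide. $W'\preccurlyeq W$ ($W'$ is a degradation of $W$) if there is a channel $R$ from the output alphabet $\mathcal Y$ of $W$ to that of $W'$ with $\Pr(y'\mid x'=a)=\sum_{y\in\mathcal Y}\Pr(y\mid x=a)R(y'\mid y)$, $a\in\{0,1\}$. $\mathrm B(\varepsilon)$ is the binary symmetric channel with crossover probability $\varepsilon$. For BIDMCs $W_1,W_2$ and $p\in[0,1]$, $pW_1+(1-p)W_2$ is the random switching channel that, with probability $p$ (resp. $1-p$), independently of the input, sends the input through $W_1$ (resp. $W_2$) and outputs the channel output together with the index of the channel used. A BIDMC is symmetric if $P_W(\varepsilon)=P_W(1-\varepsilon)$ for all $\varepsilon\in[0,1]$. *)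

theory Defs
  imports Complex_Main
begin

text \<open>A BIDMC is given by its (discrete, here finite) output alphabet Y and its
transition probabilities W x y = Pr(y | x). The input 0 is encoded as False,
the input 1 as True.\<close>

type_synonym 'y channel = "'y set \<times> (bool \<Rightarrow> 'y \<Rightarrow> real)"

definition bidmc :: "'y channel \<Rightarrow> bool" where
  "bidmc C \<longleftrightarrow> (let (Y, W) = C in
     finite Y \<and> (\<forall>a. \<forall>y\<in>Y. 0 \<le> W a y) \<and> (\<forall>a. (\<Sum>y\<in>Y. W a y) = 1))"

text \<open>The likelihood ratio of output y equals eps/(1-eps) (with eps/(1-eps) = infinity
for eps = 1, i.e. Pr(y|1) = 0 < Pr(y|0)).\<close>
definition lr_is :: "'y channel \<Rightarrow> 'y \<Rightarrow> real \<Rightarrow> bool" where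
  "lr_is C y eps \<longleftrightarrow> (let W = snd C in
     (if eps = 1 then W True y = 0 \<and> 0 < W False y
      else 0 < W True y \<and> W False y / W True y = eps / (1 - eps)))"

definition lr_profile :: "'y channel \<Rightarrow> real \<Rightarrow> real" where
  "lr_profile C eps =
     (\<Sum>y\<in>{y\<in>fst C. lr_is C y eps}. (snd C False y + snd C True y) / 2)"

definition symmetric_bidmc :: "'y channel \<Rightarrow> bool" where
  "symmetric_bidmc C \<longleftrightarrow> bidmc C \<and>
     (\<forall>eps\<in>{0..1}. lr_profile C eps = lr_profile C (1 - eps))"

text \<open>degraded C' C: C' is a degradation of C (C' \<preccurlyeq> C).\<close>
definition degraded :: "'z channel \<Rightarrow> 'y channel \<Rightarrow> bool" where
  "degraded C' C \<longleftrightarrow> (let (Y', W') = C'; (Y, W) = C in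
     \<exists>R :: 'y \<Rightarrow> 'z \<Rightarrow> real.
       (\<forall>y\<in>Y. \<forall>y'\<in>Y'. 0 \<le> R y y') \<and>
       (\<forall>y\<in>Y. (\<Sum>y'\<in>Y'. R y y') = 1) \<and>
       (\<forall>a. \<forall>y'\<in>Y'. W' a y' = (\<Sum>y\<in>Y. W a y * R y y')))"

definition bsc :: "real \<Rightarrow> bool channel" where
  "bsc eps = (UNIV, \<lambda>x y. if y = x then 1 - eps else eps)"

definition switch :: "real \<Rightarrow> 'a channel \<Rightarrow> 'b channel \<Rightarrow> ('a + 'b) channel" where
  "switch p C1 C2 = (fst C1 <+> fst C2,
     \<lambda>x z. case z of Inl y \<Rightarrow> p * snd C1 x y | Inr y \<Rightarrow> (1 - p) * snd C2 x y)"

end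

theory Submission
  imports Defs
begin

text \<open>A degradation kernel R from p B + (1 - p) Q to p B + (1 - p) W may route mass
through the outputs of B. Since the B-part of the output has to be reproduced exactly,
each B-output s satisfies a fixed-point equation, and s can be eliminated: the mass that
R sends to s is rerouted along the row of s with its self-loop removed and renormalised,
as for absorption probabilities of a Markov chain. This leaves the outputs outside s
unchanged. Eliminating the finitely many B-outputs one by one yields a kernel degrading
(1 - p) Q to (1 - p) W.\<close>

definition stochastic_on :: "'x set \<Rightarrow> 'y set \<Rightarrow> ('x \<Rightarrow> 'y \<Rightarrow> real) \<Rightarrow> bool" where
  "stochastic_on X Y R \<longleftrightarrow> (\<forall>x\<in>X. \<forall>y\<in>Y. 0 \<le> R x y) \<and> (\<forall>x\<in>X. (\<Sum>y\<in>Y. R x y) = 1)"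

lemma degraded_iff:
  "degraded (Y', W') (Y, W) \<longleftrightarrow>
     (\<exists>R. stochastic_on Y Y' R \<and> (\<forall>a. \<forall>y'\<in>Y'. W' a y' = (\<Sum>y\<in>Y. W a y * R y y')))"
  by (simp add: degraded_def stochastic_on_def)

lemma degraded_scale_iff:
  assumes "c \<noteq> 0"
  shows "degraded (Y', \<lambda>a y. c * W' a y) (Y, \<lambda>a y. c * W a y) \<longleftrightarrow> degraded (Y', W') (Y, W)"
  using assms by (simp add: degraded_iff mult.assoc flip: sum_distrib_left)

lemma bidmc_finite: "bidmc C \<Longrightarrow> finite (fst C)"
  by (auto simp: bidmc_def split: prod.splits)

lemma bidmc_nonempty: "bidmc C \<Longrightarrow> fst C \<noteq> {}"
  by (auto simp: bidmc_def split: prod.splits)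

lemma insert_Plus: "insert a A <+> B = insert (Inl a) (A <+> B)"
  by auto

lemma stochastic_on_eliminate_state:
  fixes R :: "'x \<Rightarrow> 'y \<Rightarrow> real" and u :: "'i \<Rightarrow> 'x \<Rightarrow> real"
  assumes fin: "finite X" "finite Y" and "y0 \<in> Y" and fresh: "sx \<notin> X" "sy \<notin> Y"
    and R: "stochastic_on (insert sx X) (insert sy Y) R"
    and fixpoint: "\<And>a. u a sx = (\<Sum>x\<in>insert sx X. u a x * R x sy)"
  shows "\<exists>R'. stochastic_on X Y R' \<and>
    (\<forall>a. \<forall>y\<in>Y. (\<Sum>x\<in>insert sx X. u a x * R x y) = (\<Sum>x\<in>X. u a x * R' x y))"
proof -
  define r where "r = R sx sy"
  \<comment> \<open>If r = 1 then the row of sx vanishes on Y, so any distribution on Y does.\<close>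
  define d where "d y = (if r < 1 then R sx y / (1 - r) else of_bool (y = y0))" for y
  define R' where "R' x y = R x y + R x sy * d y" for x y
  have nonneg: "0 \<le> R x y" if "x \<in> insert sx X" "y \<in> insert sy Y" for x y
    using R that unfolding stochastic_on_def by blast
  have row: "R x sy + (\<Sum>y\<in>Y. R x y) = 1" if "x \<in> insert sx X" for x
    using R that fin fresh by (auto simp: stochastic_on_def)
  have row_sx: "r + (\<Sum>y\<in>Y. R sx y) = 1"
    using row[of sx] by (simp add: r_def)
  have row_sx_Y_nonneg: "0 \<le> (\<Sum>y\<in>Y. R sx y)"
    by (rule sum_nonneg) (simp add: nonneg)
  have d_nonneg: "0 \<le> d y" if "y \<in> Y" for y
    using nonneg[of sx y] that row_sx row_sx_Y_nonneg by (simp add: d_def)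
  have d_sum: "(\<Sum>y\<in>Y. d y) = 1"
  proof (cases "r < 1")
    case True
    then show ?thesis using row_sx by (simp add: d_def field_simps flip: sum_divide_distrib)
  next
    case False
    then show ?thesis using fin \<open>y0 \<in> Y\<close> by (simp add: d_def)
  qed
  have d_rescale: "(1 - r) * d y = R sx y" if "y \<in> Y" for y
  proof (cases "r < 1")
    case False
    then have "(\<Sum>y\<in>Y. R sx y) = 0" using row_sx row_sx_Y_nonneg by linarith
    then have "R sx y = 0" using sum_nonneg_eq_0_iff[OF fin(2)] nonneg that by auto
    then show ?thesis using False row_sx row_sx_Y_nonneg by (simp add: d_def)
  qed (simp add: d_def)
  have "stochastic_on X Y R'"
    unfolding stochastic_on_def
  proof (intro conjI ballI)
    fix x y assume "x \<in> X" "y \<in> Y"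
    then show "0 \<le> R' x y" by (simp add: R'_def nonneg d_nonneg)
  next
    fix x assume "x \<in> X"
    have "(\<Sum>y\<in>Y. R' x y) = (\<Sum>y\<in>Y. R x y) + R x sy * (\<Sum>y\<in>Y. d y)"
      by (simp add: R'_def sum.distrib sum_distrib_left)
    then show "(\<Sum>y\<in>Y. R' x y) = 1" using row[of x] \<open>x \<in> X\<close> d_sum by simp
  qed
  moreover have "(\<Sum>x\<in>insert sx X. u a x * R x y) = (\<Sum>x\<in>X. u a x * R' x y)"
    if "y \<in> Y" for a y
  proof -
    have "(\<Sum>x\<in>X. u a x * R' x y) =
        (\<Sum>x\<in>X. u a x * R x y) + (\<Sum>x\<in>X. u a x * R x sy) * d y"
      by (simp add: R'_def distrib_left sum.distrib sum_distrib_right mult.assoc)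
    also have "(\<Sum>x\<in>X. u a x * R x sy) = u a sx * (1 - r)"
      using fixpoint[of a] fin fresh by (simp add: r_def algebra_simps)
    finally show ?thesis using d_rescale[OF that] fin fresh by simp
  qed
  ultimately show ?thesis by blast
qed

lemma degraded_Plus_cancel:
  fixes \<beta> :: "bool \<Rightarrow> 's \<Rightarrow> real" and \<omega> :: "bool \<Rightarrow> 'w \<Rightarrow> real"
    and \<kappa> :: "bool \<Rightarrow> 'q \<Rightarrow> real"
  assumes "finite S" "finite Yq" "finite Yw" "Yw \<noteq> {}"
    and "degraded (S <+> Yw, \<lambda>a. case_sum (\<beta> a) (\<omega> a)) (S <+> Yq, \<lambda>a. case_sum (\<beta> a) (\<kappa> a))"
  shows "degraded (Yw, \<omega>) (Yq, \<kappa>)"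
  using assms(1,5)
proof (induction S rule: finite_induct)
  case empty
  then obtain R where R: "stochastic_on ({} <+> Yq) ({} <+> Yw) R"
    and eq: "\<forall>a. \<forall>y\<in>{} <+> Yw.
      case_sum (\<beta> a) (\<omega> a) y = (\<Sum>x\<in>{} <+> Yq. case_sum (\<beta> a) (\<kappa> a) x * R x y)"
    by (auto simp: degraded_iff)
  have "stochastic_on Yq Yw (\<lambda>q w. R (Inr q) (Inr w))"
    using R assms(2,3) by (auto simp: stochastic_on_def sum.Plus)
  moreover have "\<omega> a w = (\<Sum>q\<in>Yq. \<kappa> a q * R (Inr q) (Inr w))" if "w \<in> Yw" for a w
    using eq[rule_format, of "Inr w" a] that assms(2) by (auto simp: sum.Plus)
  ultimately show ?case by (auto simp: degraded_iff)
next
  case (insert s S)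
  let ?u = "\<lambda>a. case_sum (\<beta> a) (\<kappa> a)"
  obtain R where R: "stochastic_on (insert (Inl s) (S <+> Yq)) (insert (Inl s) (S <+> Yw)) R"
    and eq: "\<forall>a. \<forall>y\<in>insert (Inl s) (S <+> Yw).
      case_sum (\<beta> a) (\<omega> a) y = (\<Sum>x\<in>insert (Inl s) (S <+> Yq). ?u a x * R x y)"
    using insert.prems by (auto simp: degraded_iff insert_Plus)
  have fixpoint: "?u a (Inl s) = (\<Sum>x\<in>insert (Inl s) (S <+> Yq). ?u a x * R x (Inl s))" for a
    using eq by simp
  have fin: "finite (S <+> Yq)" "finite (S <+> Yw)"
    using insert.hyps assms(2,3) by simp_all
  have fresh: "Inl s \<notin> S <+> Yq" "Inl s \<notin> S <+> Yw"
    using insert.hyps by auto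
  obtain w0 where "w0 \<in> Yw" using assms(4) by blast
  then have "Inr w0 \<in> S <+> Yw" by blast
  obtain R' where "stochastic_on (S <+> Yq) (S <+> Yw) R'"
    and "\<forall>a. \<forall>y\<in>S <+> Yw. (\<Sum>x\<in>insert (Inl s) (S <+> Yq). ?u a x * R x y) =
      (\<Sum>x\<in>S <+> Yq. ?u a x * R' x y)"
    using stochastic_on_eliminate_state[OF fin \<open>Inr w0 \<in> S <+> Yw\<close> fresh R, where u = ?u] fixpoint
    by blast
  then have "degraded (S <+> Yw, \<lambda>a. case_sum (\<beta> a) (\<omega> a)) (S <+> Yq, ?u)"
    using eq by (auto simp: degraded_iff)
  then show ?case by (rule insert.IH)
qed

lemma degraded_switch_cancel:
  assumes "finite (fst V)" "finite (fst W)" "fst W \<noteq> {}" "finite (fst Q)" "p \<noteq> 1"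
    and "degraded (switch p V W) (switch p V Q)"
  shows "degraded W Q"
proof -
  obtain Yw Wf where W: "W = (Yw, Wf)" by fastforce
  obtain Yq Qf where Q: "Q = (Yq, Qf)" by fastforce
  have "degraded (fst V <+> Yw, \<lambda>a. case_sum (\<lambda>y. p * snd V a y) (\<lambda>y. (1 - p) * Wf a y))
      (fst V <+> Yq, \<lambda>a. case_sum (\<lambda>y. p * snd V a y) (\<lambda>y. (1 - p) * Qf a y))"
    using assms(6) unfolding switch_def W Q prod.sel .
  then have "degraded (Yw, \<lambda>a y. (1 - p) * Wf a y) (Yq, \<lambda>a y. (1 - p) * Qf a y)"
    using degraded_Plus_cancel assms(1-4) by (simp add: W Q)
  moreover have "1 - p \<noteq> 0"
    using assms(5) by simp
  ultimately show ?thesis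
    by (simp add: W Q degraded_scale_iff)
qed

theorem lemma2:
  fixes W :: "'w channel" and Q :: "'q channel" and p eps :: real
  assumes "symmetric_bidmc W" and "symmetric_bidmc Q"
    and "0 < p" and "p < 1" and "0 \<le> eps" and "eps \<le> 1"
    and "degraded (switch p (bsc eps) W) (switch p (bsc eps) Q)"
  shows "degraded W Q"
proof (rule degraded_switch_cancel[where V = "bsc eps" and p = p])
  have W: "bidmc W" and Q: "bidmc Q"
    using assms(1,2) by (simp_all add: symmetric_bidmc_def)
  show "finite (fst W)" using W by (rule bidmc_finite)
  show "fst W \<noteq> {}" using W by (rule bidmc_nonempty)
  show "finite (fst Q)" using Q by (rule bidmc_finite)
  show "finite (fst (bsc eps))"
    by (simp add: bsc_def)
  show "p \<noteq> 1"
    using assms(4) by simp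
qed (fact assms(7))

end
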